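(* Let $\mathbb{X}=[-1,1]$ with prior $\zeta$ the uniform distribution, $\mathbb{Y}^1=\{1,2,3\}$, $\mathbb{Y}^2=\{0\}$, $\mathbb{U}^1=\mathbb{U}^2=[-1,1]$. For $m\ge1$ let $\mu_m$ be the information structure in which $y^2=0$ always and $y^1=1$ if $x\in[-1,-\tfrac12-\tfrac1{8m})$, $y^1=2$ if $x\in[-\tfrac12-\tfrac1{8m},\tfrac12+\tfrac1{4m}]$, $y^1=3$ if $x\in(\tfrac12+\tfrac1{4m},1]$; let $\mu$ be the information structure with $y^2=0$ always and $y^1=1,2,3$ according as $x\in[-1,-\tfrac12)$, $[-\tfrac12,\tfrac12]$, $(\tfrac12,1]$. Consider the two-player non-zero-sum game with costs $$c^1(x,u^1,u^2)=(x-u^1)^2-(u^2)^2,\qquad c^2(x,u^1,u^2)=\begin{cases}(u^2)^2,&u^1=0,\\(u^2-1)^2,&u^1\ne0.\end{cases}$$ Then $\|\mu_m-\mu\|_{TV}\to0$; for every $m$, in every Nash equilibrium under $\mu_m$ Player 2's expected cost is $0$, whereas in every Nash equilibrium under $\mu$ Player 2's expected cost is $1/4$. Hence, in general non-zero-sum games with bounded measurable costs, a player's equilibrium cost need not be continuous under total variation convergence of information structures.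
   Context: An information structure is the joint law of $(x,y^1,y^2)$ on $\mathbb{X}\times\mathbb{Y}^1\times\mathbb{Y}^2$. Player $i$ chooses a measurable policy $\gamma^i:\mathbb{Y}^i\to\mathbb{U}^i$ and incurs expected cost $J^i(\mu,\gamma^1,\gamma^2)=E^\mu[c^i(x,\gamma^1(y^1),\gamma^2(y^2))]$, which each player seeks to minimize. A Nash equilibrium is a pair $(\gamma^{1,*},\gamma^{2,*})$ such that $J^1(\mu,\gamma^{1,*},\gamma^{2,*})\le J^1(\mu,\gamma^1,\gamma^{2,*})$ and $J^2(\mu,\gamma^{1,*},\gamma^{2,*})\le J^2(\mu,\gamma^{1,*},\gamma^2)$ for all policies $\gamma^1,\gamma^2$. $\|\mu-\nu\|_{TV}=2\sup_B|\mu(B)-\nu(B)|$. *)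

theory Defs
  imports "HOL-Probability.Probability"
begin

text \<open>Measurable space of (x, y1, y2): X = [-1,1] embedded in the reals (Borel),
  Y1 = {1,2,3} and Y2 = {0} embedded in nat with the discrete sigma-algebra.\<close>
definition IS_space :: "(real \<times> nat \<times> nat) measure" where
  "IS_space = borel \<Otimes>\<^sub>M (count_space UNIV \<Otimes>\<^sub>M count_space UNIV)"

definition zeta :: "real measure" where
  "zeta = uniform_measure lborel {-1..1}"

definition info_struct :: "(real \<Rightarrow> nat) \<Rightarrow> (real \<Rightarrow> nat) \<Rightarrow> (real \<times> nat \<times> nat) measure" where
  "info_struct f1 f2 = distr zeta IS_space (\<lambda>x. (x, f1 x, f2 x))"

definition sig_m :: "nat \<Rightarrow> real \<Rightarrow> nat" where
  "sig_m m x = (if x < -1/2 - 1/(8 * real m) then 1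
               else if x \<le> 1/2 + 1/(4 * real m) then 2 else 3)"

definition sig :: "real \<Rightarrow> nat" where
  "sig x = (if x < -1/2 then 1 else if x \<le> 1/2 then 2 else 3)"

definition mu_m :: "nat \<Rightarrow> (real \<times> nat \<times> nat) measure" where
  "mu_m m = info_struct (sig_m m) (\<lambda>_. 0)"

definition mu :: "(real \<times> nat \<times> nat) measure" where
  "mu = info_struct sig (\<lambda>_. 0)"

definition tv_dist :: "'a measure \<Rightarrow> 'a measure \<Rightarrow> real" where
  "tv_dist M N = 2 * (SUP B \<in> sets M. \<bar>measure M B - measure N B\<bar>)"

definition Y1 :: "nat set" where "Y1 = {1,2,3}"
definition Y2 :: "nat set" where "Y2 = {0}"
definition U :: "real set" where "U = {-1..1}"

text \<open>Policies Y^i -> U^i (values outside Y^i are irrelevant; every map on a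
  discrete finite set is measurable).\<close>
definition policies :: "nat set \<Rightarrow> (nat \<Rightarrow> real) set" where
  "policies Y = {g. \<forall>y\<in>Y. g y \<in> U}"

definition cost1 :: "real \<Rightarrow> real \<Rightarrow> real \<Rightarrow> real" where
  "cost1 x u1 u2 = (x - u1)^2 - u2^2"

definition cost2 :: "real \<Rightarrow> real \<Rightarrow> real \<Rightarrow> real" where
  "cost2 x u1 u2 = (if u1 = 0 then u2^2 else (u2 - 1)^2)"

definition J :: "(real \<times> nat \<times> nat) measure \<Rightarrow> (real \<Rightarrow> real \<Rightarrow> real \<Rightarrow> real)
    \<Rightarrow> (nat \<Rightarrow> real) \<Rightarrow> (nat \<Rightarrow> real) \<Rightarrow> real" where
  "J M c g1 g2 = (\<integral>\<omega>. c (fst \<omega>) (g1 (fst (snd \<omega>))) (g2 (snd (snd \<omega>))) \<partial>M)"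

definition nash :: "(real \<times> nat \<times> nat) measure \<Rightarrow> (nat \<Rightarrow> real) \<Rightarrow> (nat \<Rightarrow> real) \<Rightarrow> bool" where
  "nash M g1 g2 \<longleftrightarrow> g1 \<in> policies Y1 \<and> g2 \<in> policies Y2 \<and>
     (\<forall>h \<in> policies Y1. J M cost1 g1 g2 \<le> J M cost1 h g2) \<and>
     (\<forall>h \<in> policies Y2. J M cost2 g1 g2 \<le> J M cost2 g1 h)"

end

theory Submission
  imports Defs
begin

text \<open>Under a uniform prior, Player 1's best response to any observation cell is the cell's
  midpoint, independently of Player 2. Player 2 therefore faces cost \<open>u\<^sup>2\<close> on the cells with
  midpoint \<open>0\<close> and \<open>(u - 1)\<^sup>2\<close> elsewhere. Under \<open>mu_m\<close> the middle cell
  \<open>[-1/2 - 1/(8m), 1/2 + 1/(4m)]\<close> is asymmetric, no midpoint vanishes, and Player 2 plays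
  \<open>u = 1\<close> at cost \<open>0\<close>; under \<open>mu\<close> the middle cell is symmetric, carries half the mass, and
  the best Player 2 can do is \<open>u = 1/2\<close> at cost \<open>1/4\<close>. The two structures differ only for
  \<open>x\<close> in a set of prior mass \<open>3/(16 m)\<close>, whence the total variation bound \<open>3/(8 m)\<close>.\<close>

definition cell :: "real \<Rightarrow> real \<Rightarrow> real \<Rightarrow> nat" where
  "cell a b x = (if x < a then 1 else if x \<le> b then 2 else 3)"

definition cell_mid :: "real \<Rightarrow> real \<Rightarrow> nat \<Rightarrow> real" where
  "cell_mid a b k = (if k = 1 then (-1 + a) / 2 else if k = 2 then (a + b) / 2 else (b + 1) / 2)"

lemma sig_m_eq_cell: "sig_m m = cell (-1/2 - 1/(8 * real m)) (1/2 + 1/(4 * real m))"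
  by (simp add: fun_eq_iff sig_m_def cell_def)

lemma sig_eq_cell: "sig = cell (-1/2) (1/2)"
  by (simp add: fun_eq_iff sig_def cell_def)

lemma sets_zeta[measurable_cong]: "sets zeta = sets borel"
  by (simp add: zeta_def)

lemma prob_space_zeta: "prob_space zeta"
  unfolding zeta_def by (rule prob_space_uniform_measure) auto

lemma measure_zeta_Icc: "-1 \<le> p \<Longrightarrow> p \<le> q \<Longrightarrow> q \<le> 1 \<Longrightarrow> measure zeta {p..q} = (q - p) / 2"
  unfolding zeta_def by (subst measure_uniform_measure) (auto simp: Int_absorb1)

lemma measurable_cell[measurable]: "cell a b \<in> borel \<rightarrow>\<^sub>M count_space UNIV"
  unfolding cell_def by measurable

lemma IS_space_eq: "IS_space = borel \<Otimes>\<^sub>M count_space UNIV"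
  unfolding IS_space_def by (simp add: pair_measure_countable)

lemma measurable_observation:
  assumes [measurable]: "f1 \<in> borel \<rightarrow>\<^sub>M count_space UNIV" "f2 \<in> borel \<rightarrow>\<^sub>M count_space UNIV"
  shows "(\<lambda>x. (x, f1 x, f2 x)) \<in> zeta \<rightarrow>\<^sub>M IS_space"
  unfolding IS_space_def by measurable

lemma borel_measurable_cost:
  fixes c :: "real \<Rightarrow> real \<Rightarrow> real \<Rightarrow> real" and g1 g2 :: "nat \<Rightarrow> real"
  assumes "\<And>u1 u2. (\<lambda>x. c x u1 u2) \<in> borel_measurable borel"
  shows "(\<lambda>\<omega>. c (fst \<omega>) (g1 (fst (snd \<omega>))) (g2 (snd (snd \<omega>)))) \<in> borel_measurable IS_space"
  unfolding IS_space_eq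
proof (rule measurable_compose_countable[where g = snd and f = "\<lambda>y \<omega>. c (fst \<omega>) (g1 (fst y)) (g2 (snd y))"])
  show "(\<lambda>\<omega>. c (fst \<omega>) (g1 (fst y)) (g2 (snd y))) \<in> borel_measurable (borel \<Otimes>\<^sub>M count_space UNIV)"
    for y :: "nat \<times> nat"
    using assms by measurable
qed simp

lemma J_info_struct:
  assumes "f1 \<in> borel \<rightarrow>\<^sub>M count_space UNIV" "f2 \<in> borel \<rightarrow>\<^sub>M count_space UNIV"
    and "\<And>u1 u2. (\<lambda>x. c x u1 u2) \<in> borel_measurable borel"
  shows "J (info_struct f1 f2) c g1 g2 = (\<integral>x. c x (g1 (f1 x)) (g2 (f2 x)) \<partial>zeta)"
  unfolding J_def info_struct_def
  by (subst integral_distr[OF measurable_observation[OF assms(1,2)] borel_measurable_cost[OF assms(3)]]) simp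

lemma zeta_eq_density: "zeta = density lborel (\<lambda>x. ennreal (indicator {-1..1} x / 2))"
  unfolding zeta_def uniform_measure_def
  by (intro arg_cong[where f = "density lborel"] ext)
     (auto split: split_indicator simp: divide_ennreal divide_ennreal_def)

lemma integral_zeta:
  fixes f :: "real \<Rightarrow> real"
  assumes "f \<in> borel_measurable borel"
  shows "integral\<^sup>L zeta f = (\<integral>x. f x * indicator {-1..1} x \<partial>lborel) / 2"
proof -
  have "integral\<^sup>L zeta f = (\<integral>x. (indicator {-1..1} x / 2) *\<^sub>R f x \<partial>lborel)"
    unfolding zeta_eq_density using assms by (subst integral_density) auto
  then show ?thesis by (simp add: mult.commute)
qed

lemma integral_zeta_cell:
  fixes F :: "nat \<Rightarrow> real \<Rightarrow> real"
  assumes ab: "-1 < a" "a \<le> b" "b < 1" and cont: "\<And>k x. isCont (F k) x"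
  shows "(\<integral>x. F (cell a b x) x \<partial>zeta) = ((\<integral>x. F 1 x * indicator {-1..a} x \<partial>lborel)
     + (\<integral>x. F 2 x * indicator {a..b} x \<partial>lborel) + (\<integral>x. F 3 x * indicator {b..1} x \<partial>lborel)) / 2"
proof -
  have [measurable]: "F k \<in> borel_measurable borel" for k
    by (rule borel_measurable_continuous_onI) (simp add: cont continuous_at_imp_continuous_on)
  have "(\<lambda>x. F (cell a b x) x) = (\<lambda>x. if x < a then F 1 x else if x \<le> b then F 2 x else F 3 x)"
    by (auto simp: cell_def)
  then have meas: "(\<lambda>x. F (cell a b x) x) \<in> borel_measurable borel"
    by simp
  have integrable: "integrable lborel (\<lambda>x. F k x * indicator {p..q} x)" for k p q
    by (rule borel_integrable_atLeastAtMost) (simp add: cont)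
  \<comment> \<open>the cells overlap only in the null set \<open>{a, b}\<close>\<close>
  have "(\<integral>x. F (cell a b x) x * indicator {-1..1} x \<partial>lborel) =
     (\<integral>x. F 1 x * indicator {-1..a} x + F 2 x * indicator {a..b} x + F 3 x * indicator {b..1} x \<partial>lborel)"
  proof (rule integral_cong_AE)
    show "AE x in lborel. F (cell a b x) x * indicator {-1..1} x =
      F 1 x * indicator {-1..a} x + F 2 x * indicator {a..b} x + F 3 x * indicator {b..1} x"
      using AE_lborel_singleton[of a] AE_lborel_singleton[of b]
      by eventually_elim (use ab in \<open>auto simp: cell_def split: split_indicator\<close>)
  qed (use meas in auto)
  also have "\<dots> = (\<integral>x. F 1 x * indicator {-1..a} x \<partial>lborel)
     + (\<integral>x. F 2 x * indicator {a..b} x \<partial>lborel) + (\<integral>x. F 3 x * indicator {b..1} x \<partial>lborel)"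
    using integrable by simp
  finally show ?thesis using integral_zeta[OF meas] by simp
qed

definition cell_struct :: "real \<Rightarrow> real \<Rightarrow> (real \<times> nat \<times> nat) measure" where
  "cell_struct a b = info_struct (cell a b) (\<lambda>_. 0)"

text \<open>\<open>sq_dev p q g\<close> is the closed form of \<open>\<integral>\<^sub>p\<^sup>q (x - g)\<^sup>2 dx\<close>.\<close>
definition sq_dev :: "real \<Rightarrow> real \<Rightarrow> real \<Rightarrow> real" where
  "sq_dev p q g = ((q - g)^3 - (p - g)^3) / 3"

lemma sq_dev_eq_midpoint: "sq_dev p q g = sq_dev p q ((p + q) / 2) + (q - p) * (g - (p + q) / 2)^2"
  unfolding sq_dev_def power2_eq_square power3_eq_cube by (simp add: field_simps)

lemma integral_cost1_Icc:
  assumes "p \<le> q"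
  shows "(\<integral>x. cost1 x g u * indicator {p..q} x \<partial>lborel) = sq_dev p q g - u^2 * (q - p)"
proof -
  have "(\<integral>x. cost1 x g u * indicator {p..q} x \<partial>lborel) =
     ((q - g)^3 / 3 - u^2 * q) - ((p - g)^3 / 3 - u^2 * p)"
    unfolding cost1_def
    by (rule integral_FTC_Icc_real[OF assms, where F = "\<lambda>x. (x - g)^3 / 3 - u^2 * x"])
       (auto intro!: derivative_eq_intros simp: power2_eq_square)
  then show ?thesis unfolding sq_dev_def by (simp add: diff_divide_distrib algebra_simps)
qed

lemma integral_const_Icc:
  assumes "p \<le> q"
  shows "(\<integral>x. (c::real) * indicator {p..q} x \<partial>lborel) = c * (q - p)"
  using assms by (simp add: mult.commute)

lemma J_cost1_cell_struct:
  assumes ab: "-1 < a" "a \<le> b" "b < 1"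
  shows "J (cell_struct a b) cost1 g1 g2 =
    (sq_dev (-1) a (cell_mid a b 1) + sq_dev a b (cell_mid a b 2) + sq_dev b 1 (cell_mid a b 3)) / 2
    + ((a + 1) * (g1 1 - cell_mid a b 1)^2 + (b - a) * (g1 2 - cell_mid a b 2)^2
       + (1 - b) * (g1 3 - cell_mid a b 3)^2) / 2
    - (g2 0)^2"
proof -
  have "J (cell_struct a b) cost1 g1 g2 = (\<integral>x. (\<lambda>k x. cost1 x (g1 k) (g2 0)) (cell a b x) x \<partial>zeta)"
    unfolding cell_struct_def by (subst J_info_struct) (auto simp: cost1_def)
  also have "\<dots> = ((sq_dev (-1) a (g1 1) - (g2 0)^2 * (a + 1)) + (sq_dev a b (g1 2) - (g2 0)^2 * (b - a))
      + (sq_dev b 1 (g1 3) - (g2 0)^2 * (1 - b))) / 2"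
    by (subst integral_zeta_cell[OF ab])
       (use ab in \<open>auto simp: cost1_def integral_cost1_Icc[unfolded cost1_def]\<close>)
  finally show ?thesis
    unfolding sq_dev_eq_midpoint[of "-1" a "g1 1"] sq_dev_eq_midpoint[of a b "g1 2"]
      sq_dev_eq_midpoint[of b 1 "g1 3"]
    by (simp add: cell_mid_def field_simps)
qed

lemma J_cost2_cell_struct:
  assumes ab: "-1 < a" "a \<le> b" "b < 1"
  shows "J (cell_struct a b) cost2 g1 g2 = ((a + 1) * cost2 0 (g1 1) (g2 0)
    + (b - a) * cost2 0 (g1 2) (g2 0) + (1 - b) * cost2 0 (g1 3) (g2 0)) / 2"
proof -
  have "J (cell_struct a b) cost2 g1 g2 = (\<integral>x. (\<lambda>k x. cost2 0 (g1 k) (g2 0)) (cell a b x) x \<partial>zeta)"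
    unfolding cell_struct_def by (subst J_info_struct) (auto simp: cost2_def)
  then show ?thesis
    by (subst (asm) integral_zeta_cell[OF ab]) (use ab in \<open>auto simp: integral_const_Icc\<close>)
qed

lemma cell_mid_policy: "-1 < a \<Longrightarrow> a \<le> b \<Longrightarrow> b < 1 \<Longrightarrow> cell_mid a b \<in> policies Y1"
  by (auto simp: policies_def Y1_def U_def cell_mid_def)

lemma policies_Y2: "policies Y2 = {g. g 0 \<in> U}"
  by (simp add: policies_def Y2_def)

lemma cell_struct_best_response_iff:
  assumes ab: "-1 < a" "a < b" "b < 1"
  shows "(\<forall>h\<in>policies Y1. J (cell_struct a b) cost1 g1 g2 \<le> J (cell_struct a b) cost1 h g2)
     \<longleftrightarrow> (\<forall>k\<in>Y1. g1 k = cell_mid a b k)"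
proof -
  define D where "D g = (a + 1) * (g 1 - cell_mid a b 1)^2 + (b - a) * (g 2 - cell_mid a b 2)^2
    + (1 - b) * (g 3 - cell_mid a b 3)^2" for g :: "nat \<Rightarrow> real"
  define K where "K = (sq_dev (-1) a (cell_mid a b 1) + sq_dev a b (cell_mid a b 2)
    + sq_dev b 1 (cell_mid a b 3)) / 2"
  have J: "J (cell_struct a b) cost1 g g2 = K + D g / 2 - (g2 0)^2" for g
    unfolding J_cost1_cell_struct[OF ab(1) less_imp_le[OF ab(2)] ab(3)] D_def K_def ..
  have D_nonneg: "0 \<le> D g" for g
    using ab by (simp add: D_def)
  have "D g1 \<le> D (cell_mid a b) \<longleftrightarrow> (\<forall>k\<in>Y1. g1 k = cell_mid a b k)"
  proof
    assume "D g1 \<le> D (cell_mid a b)"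
    then have sum_le: "(a + 1) * (g1 1 - cell_mid a b 1)^2 + (b - a) * (g1 2 - cell_mid a b 2)^2
      + (1 - b) * (g1 3 - cell_mid a b 3)^2 \<le> 0"
      by (simp add: D_def)
    have "0 \<le> (a + 1) * (g1 1 - cell_mid a b 1)^2" "0 \<le> (b - a) * (g1 2 - cell_mid a b 2)^2"
      "0 \<le> (1 - b) * (g1 3 - cell_mid a b 3)^2"
      using ab by auto
    then have "(a + 1) * (g1 1 - cell_mid a b 1)^2 = 0" "(b - a) * (g1 2 - cell_mid a b 2)^2 = 0"
      "(1 - b) * (g1 3 - cell_mid a b 3)^2 = 0"
      using sum_le by linarith+
    then show "\<forall>k\<in>Y1. g1 k = cell_mid a b k" using ab by (auto simp: Y1_def)
  qed (simp add: D_def Y1_def)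
  moreover have "D (cell_mid a b) = 0"
    by (simp add: D_def)
  ultimately show ?thesis
    using cell_mid_policy[OF ab(1) less_imp_le[OF ab(2)] ab(3)] D_nonneg
    by (auto simp: J) (metis order.trans)
qed

lemma nash_cell_struct_iff:
  assumes "-1 < a" "a < b" "b < 1"
  shows "nash (cell_struct a b) g1 g2 \<longleftrightarrow>
    g1 \<in> policies Y1 \<and> g2 \<in> policies Y2 \<and> (\<forall>k\<in>Y1. g1 k = cell_mid a b k)
    \<and> (\<forall>h\<in>policies Y2. J (cell_struct a b) cost2 g1 g2 \<le> J (cell_struct a b) cost2 g1 h)"
  unfolding nash_def cell_struct_best_response_iff[OF assms] by blast

lemma cell_struct_equilibrium_cost2:
  assumes ab: "-1 < a" "a < b" "b < 1" and "v \<in> U"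
    and cost: "\<And>g1 g2. \<forall>k\<in>Y1. g1 k = cell_mid a b k \<Longrightarrow> J (cell_struct a b) cost2 g1 g2 = c + (g2 0 - v)^2"
  shows "(\<exists>g1 g2. nash (cell_struct a b) g1 g2)
    \<and> (\<forall>g1 g2. nash (cell_struct a b) g1 g2 \<longrightarrow> J (cell_struct a b) cost2 g1 g2 = c)"
proof
  have "(\<lambda>_. v) \<in> policies Y2" using \<open>v \<in> U\<close> by (simp add: policies_Y2)
  moreover have "nash (cell_struct a b) (cell_mid a b) (\<lambda>_. v)"
    using calculation cell_mid_policy[OF ab(1) less_imp_le[OF ab(2)] ab(3)]
    by (simp add: nash_cell_struct_iff[OF ab] cost)
  ultimately show "\<exists>g1 g2. nash (cell_struct a b) g1 g2" by blast
  show "\<forall>g1 g2. nash (cell_struct a b) g1 g2 \<longrightarrow> J (cell_struct a b) cost2 g1 g2 = c"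
  proof (intro allI impI)
    fix g1 g2
    assume "nash (cell_struct a b) g1 g2"
    then have mid: "\<forall>k\<in>Y1. g1 k = cell_mid a b k"
      and "J (cell_struct a b) cost2 g1 g2 \<le> J (cell_struct a b) cost2 g1 (\<lambda>_. v)"
      using \<open>(\<lambda>_. v) \<in> policies Y2\<close> by (auto simp: nash_cell_struct_iff[OF ab])
    then have "(g2 0 - v)^2 \<le> 0" by (simp add: cost[OF mid])
    then show "J (cell_struct a b) cost2 g1 g2 = c" by (simp add: cost[OF mid])
  qed
qed

lemma tv_dist_bounded:
  assumes "\<And>B. B \<in> sets M \<Longrightarrow> \<bar>measure M B - measure N B\<bar> \<le> c"
  shows "0 \<le> tv_dist M N \<and> tv_dist M N \<le> 2 * c"
proof -
  have bdd: "bdd_above ((\<lambda>B. \<bar>measure M B - measure N B\<bar>) ` sets M)"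
    using assms by (intro bdd_aboveI2)
  have "0 \<le> (SUP B \<in> sets M. \<bar>measure M B - measure N B\<bar>)"
    by (rule cSUP_upper2[OF bdd sets.empty_sets]) simp
  moreover have "(SUP B \<in> sets M. \<bar>measure M B - measure N B\<bar>) \<le> c"
    using assms by (intro cSUP_least) auto
  ultimately show ?thesis unfolding tv_dist_def by simp
qed

lemma measure_info_struct_diff_le:
  assumes [measurable]: "f \<in> borel \<rightarrow>\<^sub>M count_space UNIV" "f' \<in> borel \<rightarrow>\<^sub>M count_space UNIV"
    "h \<in> borel \<rightarrow>\<^sub>M count_space UNIV"
    and E: "E \<in> sets borel" and agree: "\<And>x. x \<notin> E \<Longrightarrow> f x = f' x"
    and B: "B \<in> sets IS_space"
  shows "\<bar>measure (info_struct f h) B - measure (info_struct f' h) B\<bar> \<le> measure zeta E"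
proof -
  interpret prob_space zeta by (rule prob_space_zeta)
  define A where "A g = (\<lambda>x. (x, g x, h x)) -` B \<inter> space zeta" for g
  have measure_eq: "measure (info_struct g h) B = measure zeta (A g)"
    if "g \<in> borel \<rightarrow>\<^sub>M count_space UNIV" for g
    unfolding info_struct_def A_def using that B by (intro measure_distr measurable_observation) auto
  have A_sets: "A g \<in> sets zeta" if "g \<in> borel \<rightarrow>\<^sub>M count_space UNIV" for g
    unfolding A_def using that B by (intro measurable_sets[OF measurable_observation]) auto
  have "measure zeta (A g) \<le> measure zeta (A g') + measure zeta E"
    if "g \<in> borel \<rightarrow>\<^sub>M count_space UNIV" "g' \<in> borel \<rightarrow>\<^sub>M count_space UNIV"
      and "\<And>x. x \<notin> E \<Longrightarrow> g x = g' x" for g g'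
  proof -
    have "A g \<subseteq> A g' \<union> E" unfolding A_def using that(3) by auto
    then have "measure zeta (A g) \<le> measure zeta (A g' \<union> E)"
      using A_sets[OF that(1)] A_sets[OF that(2)] E by (intro finite_measure_mono) auto
    also have "\<dots> \<le> measure zeta (A g') + measure zeta E"
      using A_sets[OF that(2)] E by (intro measure_Un_le) auto
    finally show ?thesis .
  qed
  from this[of f f'] this[of f' f] show ?thesis
    using agree by (simp add: measure_eq abs_le_iff)
qed

lemma tv_dist_mu_m_bounded:
  assumes "m \<ge> 1"
  shows "0 \<le> tv_dist (mu_m m) mu \<and> tv_dist (mu_m m) mu \<le> 3 / (8 * real m)"
proof -
  define d where "d = 1 / (8 * real m)"
  have d: "0 < d" "d \<le> 1/8" using assms by (auto simp: d_def field_simps)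
  define E where "E = {-1/2 - d .. -1/2} \<union> {1/2 .. 1/2 + 2 * d}"
  have "measure zeta E \<le> measure zeta {-1/2 - d .. -1/2} + measure zeta {1/2 .. 1/2 + 2 * d}"
    unfolding E_def by (rule measure_Un_le) auto
  also have "\<dots> = 3 * d / 2" using d by (simp add: measure_zeta_Icc)
  finally have measure_E: "measure zeta E \<le> 3 * d / 2" .
  have sig_m: "sig_m m = cell (-1/2 - d) (1/2 + 2 * d)"
    unfolding sig_m_eq_cell d_def by simp
  have "\<bar>measure (mu_m m) B - measure mu B\<bar> \<le> 3 * d / 2" if "B \<in> sets (mu_m m)" for B
  proof -
    have "B \<in> sets IS_space" using that by (simp add: mu_m_def info_struct_def)
    moreover have "x \<notin> E \<Longrightarrow> sig_m m x = sig x" for x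
      using d unfolding E_def sig_m sig_eq_cell cell_def by auto
    moreover have "E \<in> sets borel" by (simp add: E_def)
    ultimately have "\<bar>measure (mu_m m) B - measure mu B\<bar> \<le> measure zeta E"
      unfolding mu_m_def mu_def by (intro measure_info_struct_diff_le) (auto simp: sig_m sig_eq_cell)
    with measure_E show ?thesis by linarith
  qed
  then have "0 \<le> tv_dist (mu_m m) mu \<and> tv_dist (mu_m m) mu \<le> 2 * (3 * d / 2)"
    by (rule tv_dist_bounded)
  then show ?thesis by (simp add: d_def)
qed

lemma tv_dist_mu_m_tendsto: "(\<lambda>m. tv_dist (mu_m m) mu) \<longlonglongrightarrow> 0"
proof (rule tendsto_sandwich[where f = "\<lambda>_. 0" and h = "\<lambda>m. (3/8) / real m"])
  show "\<forall>\<^sub>F m in sequentially. 0 \<le> tv_dist (mu_m m) mu"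
    "\<forall>\<^sub>F m in sequentially. tv_dist (mu_m m) mu \<le> (3/8) / real m"
    using eventually_ge_at_top[of "1::nat"]
    by (eventually_elim, use tv_dist_mu_m_bounded in auto)+
  show "(\<lambda>m. (3/8) / real m) \<longlonglongrightarrow> 0" by (rule lim_const_over_n)
qed simp

lemma mu_m_equilibrium_cost2:
  assumes "m \<ge> 1"
  shows "(\<exists>g1 g2. nash (mu_m m) g1 g2) \<and> (\<forall>g1 g2. nash (mu_m m) g1 g2 \<longrightarrow> J (mu_m m) cost2 g1 g2 = 0)"
proof -
  define d where "d = 1 / (8 * real m)"
  have d: "0 < d" "d \<le> 1/8" using assms by (auto simp: d_def field_simps)
  define a where "a = -1/2 - d"
  define b where "b = 1/2 + 2 * d"
  have ab: "-1 < a" "a < b" "b < 1" using d by (auto simp: a_def b_def)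
  have mu_m: "mu_m m = cell_struct a b"
    unfolding mu_m_def cell_struct_def sig_m_eq_cell a_def b_def d_def by simp
  have mid_nonzero: "cell_mid a b k \<noteq> 0" if "k \<in> Y1" for k
    using that d by (auto simp: Y1_def cell_mid_def a_def b_def)
  show ?thesis unfolding mu_m
  proof (rule cell_struct_equilibrium_cost2[OF ab, where v = 1 and c = 0])
    fix g1 g2 :: "nat \<Rightarrow> real"
    assume "\<forall>k\<in>Y1. g1 k = cell_mid a b k"
    with mid_nonzero have "g1 k \<noteq> 0" if "k \<in> {1, 2, 3}" for k
      using that by (auto simp: Y1_def)
    then show "J (cell_struct a b) cost2 g1 g2 = 0 + (g2 0 - 1)^2"
      using ab by (simp add: J_cost2_cell_struct cost2_def field_simps)
  qed (simp add: U_def)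
qed

lemma mu_equilibrium_cost2:
  "(\<exists>g1 g2. nash mu g1 g2) \<and> (\<forall>g1 g2. nash mu g1 g2 \<longrightarrow> J mu cost2 g1 g2 = 1/4)"
proof -
  have ab: "-1 < (-1/2::real)" "-1/2 < (1/2::real)" "1/2 < (1::real)" by simp_all
  have mu: "mu = cell_struct (-1/2) (1/2)"
    unfolding mu_def cell_struct_def sig_eq_cell ..
  show ?thesis unfolding mu
  proof (rule cell_struct_equilibrium_cost2[OF ab, where v = "1/2" and c = "1/4"])
    fix g1 g2 :: "nat \<Rightarrow> real"
    assume "\<forall>k\<in>Y1. g1 k = cell_mid (-1/2) (1/2) k"
    then have "g1 1 = -3/4" "g1 2 = 0" "g1 3 = 3/4"
      by (auto simp: Y1_def cell_mid_def)
    then show "J (cell_struct (-1/2) (1/2)) cost2 g1 g2 = 1/4 + (g2 0 - 1/2)^2"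
      by (simp add: J_cost2_cell_struct cost2_def power2_eq_square field_simps)
  qed (simp add: U_def)
qed

theorem mainTheorem11:
  shows "((\<lambda>m. tv_dist (mu_m m) mu) \<longlonglongrightarrow> 0)
    \<and> (\<forall>m\<ge>1. (\<exists>g1 g2. nash (mu_m m) g1 g2)
              \<and> (\<forall>g1 g2. nash (mu_m m) g1 g2 \<longrightarrow> J (mu_m m) cost2 g1 g2 = 0))
    \<and> (\<exists>g1 g2. nash mu g1 g2)
    \<and> (\<forall>g1 g2. nash mu g1 g2 \<longrightarrow> J mu cost2 g1 g2 = 1/4)"
  using tv_dist_mu_m_tendsto mu_m_equilibrium_cost2 mu_equilibrium_cost2 by blast

end
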